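(* Let $((A_i,B_i))_{i\in\mathbb N}$ be a strictly increasing sequence of tight separations of a connected locally finite graph $G$, with limit $(A,B)=(\bigcup_iA_i,\bigcap_iB_i)$. If the sequence is non-exhaustive (i.e. $B\neq\emptyset$), then $A\cap B$ is infinite.
   Context: A separation of $G$ is an unordered pair $\{A,B\}$ of subsets of $V(G)$ with $A\cup B=V(G)$ and no edge between $A\setminus B$ and $B\setminus A$; oriented separations $(A,B)$ are ordered by $(A,B)\le(C,D)$ iff $A\subseteq C$ and $B\supseteq D$. For $X\subseteq V(G)$, a component $K$ of $G-X$ is tight if $N_G(K)=X$. A separation $\{A,B\}$ is tight if both $A\setminus B$ and $B\setminus A$ contain the vertex set of a tight component of $G-(A\cap B)$. A strictly increasing sequence is exhaustive if its limit $(A,B)$ has $B=\emptyset$. *)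

theory Defs
  imports Main
begin

definition graph :: "'a set \<Rightarrow> ('a \<Rightarrow> 'a \<Rightarrow> bool) \<Rightarrow> bool" where
  "graph V E \<longleftrightarrow> (\<forall>u v. E u v \<longrightarrow> u \<in> V \<and> v \<in> V \<and> E v u \<and> u \<noteq> v)"

definition locally_finite :: "'a set \<Rightarrow> ('a \<Rightarrow> 'a \<Rightarrow> bool) \<Rightarrow> bool" where
  "locally_finite V E \<longleftrightarrow> (\<forall>v\<in>V. finite {u. E v u})"

definition reach_in :: "('a \<Rightarrow> 'a \<Rightarrow> bool) \<Rightarrow> 'a set \<Rightarrow> 'a \<Rightarrow> 'a \<Rightarrow> bool" where
  "reach_in E S x y \<longleftrightarrow> x \<in> S \<and> (\<lambda>u v. u \<in> S \<and> v \<in> S \<and> E u v)\<^sup>*\<^sup>* x y"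

definition connected_graph :: "'a set \<Rightarrow> ('a \<Rightarrow> 'a \<Rightarrow> bool) \<Rightarrow> bool" where
  "connected_graph V E \<longleftrightarrow> V \<noteq> {} \<and> (\<forall>x\<in>V. \<forall>y\<in>V. reach_in E V x y)"

definition component_of :: "'a set \<Rightarrow> ('a \<Rightarrow> 'a \<Rightarrow> bool) \<Rightarrow> 'a set \<Rightarrow> 'a set \<Rightarrow> bool" where
  "component_of V E X K \<longleftrightarrow> (\<exists>x\<in>V - X. K = {y. reach_in E (V - X) x y})"

definition nbh :: "'a set \<Rightarrow> ('a \<Rightarrow> 'a \<Rightarrow> bool) \<Rightarrow> 'a set \<Rightarrow> 'a set" where
  "nbh V E K = {v \<in> V - K. \<exists>u\<in>K. E u v}"

definition tight_component :: "'a set \<Rightarrow> ('a \<Rightarrow> 'a \<Rightarrow> bool) \<Rightarrow> 'a set \<Rightarrow> 'a set \<Rightarrow> bool" where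
  "tight_component V E X K \<longleftrightarrow> component_of V E X K \<and> nbh V E K = X"

definition separation :: "'a set \<Rightarrow> ('a \<Rightarrow> 'a \<Rightarrow> bool) \<Rightarrow> 'a set \<Rightarrow> 'a set \<Rightarrow> bool" where
  "separation V E A B \<longleftrightarrow> A \<union> B = V \<and> (\<forall>a\<in>A - B. \<forall>b\<in>B - A. \<not> E a b)"

definition tight_separation :: "'a set \<Rightarrow> ('a \<Rightarrow> 'a \<Rightarrow> bool) \<Rightarrow> 'a set \<Rightarrow> 'a set \<Rightarrow> bool" where
  "tight_separation V E A B \<longleftrightarrow> separation V E A B
     \<and> (\<exists>K. tight_component V E (A \<inter> B) K \<and> K \<subseteq> A - B)
     \<and> (\<exists>K. tight_component V E (A \<inter> B) K \<and> K \<subseteq> B - A)"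

definition sep_le :: "'a set \<times> 'a set \<Rightarrow> 'a set \<times> 'a set \<Rightarrow> bool" where
  "sep_le S T \<longleftrightarrow> fst S \<subseteq> fst T \<and> snd T \<subseteq> snd S"

definition sep_less :: "'a set \<times> 'a set \<Rightarrow> 'a set \<times> 'a set \<Rightarrow> bool" where
  "sep_less S T \<longleftrightarrow> sep_le S T \<and> S \<noteq> T"

end

theory Submission
  imports Defs
begin

text \<open>Suppose the limit separator \<open>X = A \<inter> B\<close> were finite. It is nonempty, since \<open>G\<close> is
connected and \<open>(A, B)\<close> is a separation with both sides nonempty. Only finitely many vertices lie
in \<open>X\<close> or next to it, so from some index \<open>N\<close> on every such vertex of \<open>A\<close> already lies in
\<open>A\<^sub>i\<close>. For \<open>i \<ge> N\<close> a tight component of \<open>G - (A\<^sub>i \<inter> B\<^sub>i)\<close> on the \<open>B\<^sub>i\<close>-side contains a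
neighbour of a vertex of \<open>X\<close> outside \<open>A\<close>, hence lies in \<open>B \<setminus> A\<close>; as every vertex of
\<open>A\<^sub>i \<inter> B\<^sub>i\<close> has a neighbour in it, \<open>A\<^sub>i \<inter> B\<^sub>i = X\<close>. Every vertex of \<open>A \<setminus> B\<close> is then
joined, avoiding \<open>X\<close>, to a vertex of \<open>A\<^sub>i \<setminus> B\<^sub>i\<close>, so \<open>A\<^sub>i = A\<close>. Thus the sequence is
eventually constant, contradicting strict monotonicity.\<close>

lemma separation_swap:
  assumes "graph V E" "separation V E A B"
  shows "separation V E B A"
  using assms unfolding graph_def separation_def by blast

lemma separation_Union_Inter:
  fixes A B :: "'i::linorder \<Rightarrow> 'a set"
  assumes "mono A" "antimono B" "\<And>i. separation V E (A i) (B i)"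
  shows "separation V E (\<Union>i. A i) (\<Inter>i. B i)"
  unfolding separation_def
proof (intro conjI ballI)
  show "(\<Union>i. A i) \<union> (\<Inter>i. B i) = V"
    using assms(3) unfolding separation_def by blast
  fix a b assume a: "a \<in> (\<Union>i. A i) - (\<Inter>i. B i)" and b: "b \<in> (\<Inter>i. B i) - (\<Union>i. A i)"
  then obtain i j where "a \<in> A i" "a \<notin> B j" by blast
  moreover have "A i \<subseteq> A (max i j)" using assms(1) max.cobounded1 unfolding mono_def by blast
  moreover have "B (max i j) \<subseteq> B j" using assms(2) max.cobounded2 unfolding antimono_def by blast
  ultimately have "a \<in> A (max i j) - B (max i j)" by blast
  moreover have "b \<in> B (max i j) - A (max i j)" using b by blast
  ultimately show "\<not> E a b" using assms(3) unfolding separation_def by blast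
qed

lemma reach_in_preserves_side:
  assumes "graph V E" "separation V E A B" "reach_in E S x y"
    and "S \<inter> (A \<inter> B) = {}" "x \<in> A - B"
  shows "y \<in> A - B"
proof -
  from assms(3) have "(\<lambda>u v. u \<in> S \<and> v \<in> S \<and> E u v)\<^sup>*\<^sup>* x y" by (simp add: reach_in_def)
  then show ?thesis
  proof (induction rule: rtranclp_induct)
    case base show ?case using assms(5) .
  next
    case (step y w)
    then have "w \<in> V" "E y w" "w \<in> S" using assms(1) unfolding graph_def by auto
    then show ?case using step.IH assms(2,4) unfolding separation_def by blast
  qed
qed

lemma component_subset_side:
  assumes "graph V E" "separation V E A B" "component_of V E X K"
    and "A \<inter> B \<subseteq> X" "u \<in> K" "u \<in> A - B"
  shows "K \<subseteq> A - B"
proof -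
  from assms(3) obtain r where r: "r \<in> V - X" and K: "K = {y. reach_in E (V - X) r y}"
    unfolding component_of_def by blast
  have avoid: "(V - X) \<inter> (A \<inter> B) = {}" "(V - X) \<inter> (B \<inter> A) = {}" using assms(4) by auto
  have "r \<in> A - B"
  proof (rule ccontr)
    assume "r \<notin> A - B"
    then have "r \<in> B - A" using r assms(2,4) unfolding separation_def by blast
    with reach_in_preserves_side[OF assms(1) separation_swap[OF assms(1,2)] _ avoid(2)]
    show False using assms(5,6) K by blast
  qed
  then show ?thesis using reach_in_preserves_side[OF assms(1,2) _ avoid(1)] K by blast
qed

lemma reach_in_hits_set:
  assumes "reach_in E V z y" "z \<notin> X" "y \<in> X"
  shows "\<exists>f. reach_in E (V - X) z f \<and> (\<exists>x\<in>X. E f x)"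
proof -
  from assms(1) have z: "z \<in> V" and path: "(\<lambda>u v. u \<in> V \<and> v \<in> V \<and> E u v)\<^sup>*\<^sup>* z y"
    by (simp_all add: reach_in_def)
  have "(\<exists>f. reach_in E (V - X) z f \<and> (\<exists>x\<in>X. E f x)) \<or> (y \<notin> X \<and> reach_in E (V - X) z y)"
    using path
  proof (induction rule: rtranclp_induct)
    case base then show ?case using z assms(2) by (simp add: reach_in_def)
  next
    case (step y w)
    show ?case
    proof (cases "\<exists>f. reach_in E (V - X) z f \<and> (\<exists>x\<in>X. E f x)")
      case False
      with step.IH have yX: "y \<notin> X" and ry: "reach_in E (V - X) z y" by auto
      show ?thesis
      proof (cases "w \<in> X")
        case True then show ?thesis using ry step.hyps(2) by blast
      next
        case False
        have "(\<lambda>u v. u \<in> V - X \<and> v \<in> V - X \<and> E u v)\<^sup>*\<^sup>* z w"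
          using ry step.hyps(2) False yX unfolding reach_in_def
          by (auto intro: rtranclp.rtrancl_into_rtrancl)
        then show ?thesis using False ry by (simp add: reach_in_def)
      qed
    qed blast
  qed
  then show ?thesis using assms(3) by blast
qed

lemma connected_separation_inter_nonempty:
  assumes "graph V E" "connected_graph V E" "separation V E A B"
    and "a \<in> A - B" "b \<in> B - A"
  shows "A \<inter> B \<noteq> {}"
proof
  assume empty: "A \<inter> B = {}"
  have "a \<in> V" "b \<in> V" using assms(3-5) unfolding separation_def by auto
  then have "reach_in E V a b" using assms(2) unfolding connected_graph_def by blast
  then have "b \<in> A - B" using reach_in_preserves_side[OF assms(1,3) _ _ assms(4)] empty by blast
  with assms(5) show False by blast
qed

text \<open>Below, \<open>(LA, LB)\<close> plays the limit and \<open>(A, B)\<close> a late member of the sequence; the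
hypotheses on vertices in or next to \<open>LA \<inter> LB\<close> say that these are already settled in \<open>A\<close>.\<close>

lemma tight_separator_eq_limit_separator:
  assumes "graph V E" "separation V E LA LB" "A \<subseteq> LA" "LB \<subseteq> B" "LA \<inter> LB \<subseteq> A"
    and "tight_component V E (A \<inter> B) D" "D \<subseteq> B - A"
    and "y \<in> LA \<inter> LB" "\<And>u. E y u \<Longrightarrow> u \<in> LA \<Longrightarrow> u \<in> A"
  shows "A \<inter> B = LA \<inter> LB"
proof
  show "LA \<inter> LB \<subseteq> A \<inter> B" using assms(4,5) by blast
  have sym: "\<And>u v. E u v \<Longrightarrow> E v u" and inV: "\<And>u v. E u v \<Longrightarrow> v \<in> V"
    using assms(1) unfolding graph_def by auto
  have comp: "component_of V E (A \<inter> B) D" and nbh: "nbh V E D = A \<inter> B"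
    using assms(6) unfolding tight_component_def by auto
  have "y \<in> nbh V E D" using nbh assms(4,5,8) by blast
  then obtain u where u: "u \<in> D" "E u y" unfolding nbh_def by blast
  have "u \<notin> LA" using u assms(7,9) sym by blast
  then have "u \<in> LB - LA" using assms(2) inV[OF sym[OF u(2)]] unfolding separation_def by blast
  then have D: "D \<subseteq> LB - LA"
    using component_subset_side[OF assms(1) separation_swap[OF assms(1,2)] comp] u(1) assms(4,5)
    by blast
  show "A \<inter> B \<subseteq> LA \<inter> LB"
  proof
    fix x assume x: "x \<in> A \<inter> B"
    then obtain d where "d \<in> D" "E d x" using nbh unfolding nbh_def by blast
    then show "x \<in> LA \<inter> LB" using x D assms(2,3) sym unfolding separation_def by blast
  qed
qed

lemma side_eq_limit_side:
  assumes "graph V E" "connected_graph V E" "separation V E A B" "separation V E LA LB"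
    and "A \<subseteq> LA" "A \<inter> B = LA \<inter> LB" "y \<in> LA \<inter> LB"
    and "\<And>x u. x \<in> LA \<inter> LB \<Longrightarrow> E x u \<Longrightarrow> u \<in> LA \<Longrightarrow> u \<in> A"
  shows "A = LA"
proof
  show "LA \<subseteq> A"
  proof
    fix z assume z: "z \<in> LA"
    show "z \<in> A"
    proof (cases "z \<in> LA \<inter> LB")
      case True then show ?thesis using assms(6) by blast
    next
      case False
      define X where "X = LA \<inter> LB"
      define K where "K = {v. reach_in E (V - X) z v}"
      have zV: "z \<in> V" using z assms(4) unfolding separation_def by blast
      have "y \<in> V" using assms(4,7) unfolding separation_def by blast
      then have "reach_in E V z y" using assms(2) zV unfolding connected_graph_def by blast
      then obtain f x where f: "f \<in> K" "x \<in> X" "E f x"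
        using reach_in_hits_set[of E V z y X] False assms(7) unfolding K_def X_def by blast
      have comp: "component_of V E X K"
        using zV False unfolding component_of_def K_def X_def by blast
      have zK: "z \<in> K" using zV False unfolding K_def X_def reach_in_def by blast
      have "f \<in> LA - LB"
        using component_subset_side[OF assms(1,4) comp _ zK] z False f(1) unfolding X_def by blast
      moreover have "E x f" using f(3) assms(1) unfolding graph_def by blast
      ultimately have "f \<in> A - B" using assms(6,8) f(2) unfolding X_def by blast
      then have "K \<subseteq> A - B"
        using component_subset_side[OF assms(1,3) comp _ f(1)] assms(6) unfolding X_def by blast
      then show ?thesis using zK by blast
    qed
  qed
qed (use assms(5) in blast)

lemma tight_separation_eq_limit:
  assumes "graph V E" "connected_graph V E" "tight_separation V E A B"
    and "separation V E LA LB" "A \<subseteq> LA" "LB \<subseteq> B" "LA \<inter> LB \<noteq> {}" "LA \<inter> LB \<subseteq> A"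
    and "\<And>x u. x \<in> LA \<inter> LB \<Longrightarrow> E x u \<Longrightarrow> u \<in> LA \<Longrightarrow> u \<in> A"
  shows "A = LA" "B = (V - LA) \<union> (LA \<inter> LB)"
proof -
  have sep: "separation V E A B" and
    "\<exists>D. tight_component V E (A \<inter> B) D \<and> D \<subseteq> B - A"
    using assms(3) unfolding tight_separation_def by auto
  moreover obtain y where y: "y \<in> LA \<inter> LB" using assms(7) by blast
  ultimately have sep_eq: "A \<inter> B = LA \<inter> LB"
    using tight_separator_eq_limit_separator[OF assms(1,4-6,8)] assms(9) by blast
  show A_eq: "A = LA"
    using side_eq_limit_side[OF assms(1,2) sep assms(4,5) sep_eq y assms(9)] .
  show "B = (V - LA) \<union> (LA \<inter> LB)"
    using sep sep_eq A_eq unfolding separation_def by blast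
qed

lemma eventually_mem_mono:
  assumes "mono A"
  shows "eventually (\<lambda>m. x \<in> (\<Union>i. A i) \<longrightarrow> x \<in> A m) sequentially"
proof (cases "x \<in> (\<Union>i. A i)")
  case True
  then obtain n where "x \<in> A n" by blast
  then show ?thesis using assms by (auto simp: eventually_sequentially dest: monoD)
qed simp

theorem mainTheorem5:
  fixes V :: "'a set" and E :: "'a \<Rightarrow> 'a \<Rightarrow> bool"
    and A B :: "nat \<Rightarrow> 'a set"
  assumes "graph V E" and "connected_graph V E" and "locally_finite V E"
    and "\<And>i. tight_separation V E (A i) (B i)"
    and "\<And>i. sep_less (A i, B i) (A (Suc i), B (Suc i))"
    and "(\<Inter>i. B i) \<noteq> {}"
  shows "infinite ((\<Union>i. A i) \<inter> (\<Inter>i. B i))"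
proof
  define LA LB where "LA = (\<Union>i. A i)" and "LB = (\<Inter>i. B i)"
  assume finite: "finite (LA \<inter> LB)"
  have mono: "mono A" "antimono B"
    using assms(5) unfolding sep_less_def sep_le_def mono_iff_le_Suc antimono_iff_le_Suc by auto
  have "\<And>i. separation V E (A i) (B i)"
    using assms(4) unfolding tight_separation_def by blast
  then have sepL: "separation V E LA LB"
    unfolding LA_def LB_def by (rule separation_Union_Inter[OF mono])
  obtain K where "component_of V E (A 0 \<inter> B 0) K" "K \<subseteq> A 0 - B 0"
    using assms(4)[of 0] unfolding tight_separation_def tight_component_def by blast
  then obtain a where "a \<in> A 0 - B 0"
    unfolding component_of_def reach_in_def by blast
  then have "a \<in> LA - LB" unfolding LA_def LB_def by blast
  moreover obtain b where "b \<in> LB" using assms(6) unfolding LB_def by blast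
  ultimately have nonempty: "LA \<inter> LB \<noteq> {}"
    using connected_separation_inter_nonempty[OF assms(1,2) sepL, of a b] by blast
  define F where "F = (LA \<inter> LB) \<union> (\<Union>x\<in>LA \<inter> LB. {u. E x u})"
  have "\<forall>x\<in>LA \<inter> LB. finite {u. E x u}"
    using assms(3) sepL unfolding locally_finite_def separation_def by blast
  then have "finite F" using finite unfolding F_def by simp
  moreover have "\<forall>u\<in>F. eventually (\<lambda>m. u \<in> LA \<longrightarrow> u \<in> A m) sequentially"
    using eventually_mem_mono[OF mono(1)] by (simp add: LA_def)
  ultimately have "eventually (\<lambda>m. \<forall>u\<in>F. u \<in> LA \<longrightarrow> u \<in> A m) sequentially"
    by (rule eventually_ball_finite)
  then obtain N where N: "\<And>m u. N \<le> m \<Longrightarrow> u \<in> F \<Longrightarrow> u \<in> LA \<Longrightarrow> u \<in> A m"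
    unfolding eventually_sequentially by blast
  have "A m = LA \<and> B m = (V - LA) \<union> (LA \<inter> LB)" if "N \<le> m" for m
  proof -
    have "A m \<subseteq> LA" "LB \<subseteq> B m" unfolding LA_def LB_def by blast+
    moreover have "LA \<inter> LB \<subseteq> A m" using N[OF that] unfolding F_def by blast
    moreover have "\<And>x u. x \<in> LA \<inter> LB \<Longrightarrow> E x u \<Longrightarrow> u \<in> LA \<Longrightarrow> u \<in> A m"
      using N[OF that] unfolding F_def by blast
    ultimately show ?thesis
      using tight_separation_eq_limit[OF assms(1,2,4) sepL _ _ nonempty] by blast
  qed
  then have "(A N, B N) = (A (Suc N), B (Suc N))" by simp
  with assms(5)[of N] show False unfolding sep_less_def by simp
qed

end
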